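(* Let $k$ be a field of characteristic $0$, $R=k[x_1,\dots,x_n]$, $\ell=x_1+\dots+x_n$, let $d_1,\dots,d_{n+1}$ be positive integers and $G=(x_1^{d_1},\dots,x_n^{d_n})\colon(\ell^{d_{n+1}})$. Then $R/G$ has the strong Lefschetz property.
   Context: A graded Artinian $k$-algebra $A$ has the strong Lefschetz property if there exists $\ell\in A_1$ such that for all $i$ and $j\ge0$ the multiplication map $\cdot\ell^j\colon A_i\to A_{i+j}$ is injective or surjective. *)

theory Defs
  imports "HOL-Library.Poly_Mapping"
begin

text \<open>Polynomial ring R = k[x_i : i in 'n] (variables indexed by a finite type 'n,
  so n = CARD('n)), represented as finitely supported maps from monomials
  (exponent vectors, finitely supported maps from 'n to nat) to coefficients.\<close>
type_synonym ('n, 'a) mpoly = "('n \<Rightarrow>\<^sub>0 nat) \<Rightarrow>\<^sub>0 'a"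

definition var :: "'n \<Rightarrow> ('n, 'a::comm_ring_1) mpoly" where
  "var i = Poly_Mapping.single (Poly_Mapping.single i 1) 1"

definition mdeg :: "('n \<Rightarrow>\<^sub>0 nat) \<Rightarrow> nat" where
  "mdeg m = (\<Sum>i\<in>Poly_Mapping.keys m. Poly_Mapping.lookup m i)"

definition homog :: "nat \<Rightarrow> ('n, 'a::comm_ring_1) mpoly set" where
  "homog d = {f. \<forall>m\<in>Poly_Mapping.keys f. mdeg m = d}"

definition gen_ideal :: "('n::finite \<Rightarrow> ('n, 'a::comm_ring_1) mpoly) \<Rightarrow> ('n, 'a) mpoly set" where
  "gen_ideal g = {f. \<exists>c. f = (\<Sum>i\<in>UNIV. c i * g i)}"

definition colon :: "('n, 'a::comm_ring_1) mpoly set \<Rightarrow> ('n, 'a) mpoly \<Rightarrow> ('n, 'a) mpoly set" where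
  "colon I h = {f. f * h \<in> I}"

text \<open>Strong Lefschetz property of the graded algebra R/G for a homogeneous ideal G:
  there is a linear form L (representing an element of A_1) such that for all i, j,
  the map A_i \<rightarrow> A_{i+j}, [f] \<mapsto> [L^j f] is injective or surjective.
  Here A_i = R_i / (G \<inter> R_i).\<close>
definition strong_lefschetz :: "('n, 'a::comm_ring_1) mpoly set \<Rightarrow> bool" where
  "strong_lefschetz G \<longleftrightarrow>
     (\<exists>L\<in>homog 1. \<forall>i j.
        (\<forall>f\<in>homog i. L ^ j * f \<in> G \<longrightarrow> f \<in> G) \<or>
        (\<forall>g\<in>homog (i + j). \<exists>f\<in>homog i. g - L ^ j * f \<in> G))"

end

theory Submission
  imports Defs "HOL.Vector_Spaces" "HOL-Library.FuncSet"
begin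

text \<open>
  Let \<open>A = R/(x\<^sub>1\<^bsup>d\<^sub>1\<^esup>, ..., x\<^sub>n\<^bsup>d\<^sub>n\<^esup>)\<close>, with basis the monomials \<open>x\<^sup>b\<close>, \<open>b < d\<close>, and socle degree
  \<open>D = \<Sum>(d\<^sub>i - 1)\<close>. Multiplication by \<open>\<ell>\<close> is a raising operator \<open>E\<close> on \<open>A\<close>, and the lowering
  operator \<open>F x\<^sup>b = \<Sum>\<^sub>j b\<^sub>j (d\<^sub>j - b\<^sub>j) x\<^bsup>b - e\<^sub>j\<^esup>\<close> satisfies \<open>[E, F] = 2m - D\<close> on \<open>A\<^sub>m\<close>, so \<open>A\<close> is a graded
  \<open>sl\<^sub>2\<close>-module. The usual \<open>sl\<^sub>2\<close> computation then shows that \<open>E\<^sup>j : A\<^sub>m \<rightarrow> A\<^bsub>m+j\<^esub>\<close> is injective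
  for \<open>2m + j \<le> D\<close> and surjective for \<open>2m + j \<ge> D\<close> (in characteristic 0).

  A polynomial lies in \<open>G = (x\<^sub>i\<^bsup>d\<^sub>i\<^esup>) : \<ell>\<^sup>e\<close> iff \<open>E\<^sup>e\<close> kills its image in \<open>A\<close>. Hence multiplication by
  \<open>\<ell>\<^sup>j\<close> from \<open>(R/G)\<^sub>i\<close> is injective as soon as \<open>E\<^bsup>j+e\<^esup>\<close> is injective on \<open>A\<^sub>i\<close>, i.e. for
  \<open>2i + j + e \<le> D\<close>, and surjective as soon as \<open>E\<^bsup>j+e\<^esup> : A\<^sub>i \<rightarrow> A\<^bsub>i+j+e\<^esub>\<close> is, i.e. in all other cases.
\<close>

section \<open>Lefschetz properties of graded \<open>sl\<^sub>2\<close>-modules\<close>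

locale graded_sl2 = vector_space scale
  for scale :: "'a::field_char_0 \<Rightarrow> 'v::ab_group_add \<Rightarrow> 'v" (infixr \<open>*s\<close> 75) +
  fixes V :: "nat \<Rightarrow> 'v set" and D :: nat and E F :: "'v \<Rightarrow> 'v"
  assumes subspace_V: "subspace (V m)"
    and linear_E: "Vector_Spaces.linear scale scale E"
    and linear_F: "Vector_Spaces.linear scale scale F"
    and E_mem: "v \<in> V m \<Longrightarrow> E v \<in> V (Suc m)"
    and F_mem: "v \<in> V m \<Longrightarrow> F v \<in> V (m - 1)"
    and F_bottom: "v \<in> V 0 \<Longrightarrow> F v = 0"
    and V_above_top: "D < m \<Longrightarrow> v \<in> V m \<Longrightarrow> v = 0"
    and commutator: "v \<in> V m \<Longrightarrow> E (F v) - F (E v) = of_int (2 * int m - int D) *s v"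
begin

definition weight :: "nat \<Rightarrow> 'a" where
  "weight m = of_int (2 * int m - int D)"

lemma weight_add: "weight (m + k) = weight m + 2 * of_nat k"
  by (simp add: weight_def algebra_simps)

lemma weight_add_of_int_eq_0_iff: "weight m + of_int k = 0 \<longleftrightarrow> 2 * int m + k = int D"
proof -
  have "weight m + of_int k = of_int (2 * int m + k - int D)"
    by (simp add: weight_def)
  then show ?thesis
    by (metis of_int_eq_0_iff eq_iff_diff_eq_0)
qed

lemma commutator_weight: "v \<in> V m \<Longrightarrow> E (F v) - F (E v) = weight m *s v"
  unfolding weight_def by (rule commutator)

sublocale E: Vector_Spaces.linear scale scale E
  by (rule linear_E)

sublocale F: Vector_Spaces.linear scale scale F
  by (rule linear_F)

lemma E_pow_zero [simp]: "(E ^^ k) 0 = 0"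
  by (induction k) simp_all

lemma E_pow_add: "(E ^^ k) (v + w) = (E ^^ k) v + (E ^^ k) w"
  by (induction k) (simp_all add: E.add)

lemma E_pow_diff: "(E ^^ k) (v - w) = (E ^^ k) v - (E ^^ k) w"
  by (induction k) (simp_all add: E.diff)

lemma E_pow_scale: "(E ^^ k) (c *s v) = c *s (E ^^ k) v"
  by (induction k) (simp_all add: E.scale)

lemma E_pow_mem: "v \<in> V m \<Longrightarrow> (E ^^ k) v \<in> V (m + k)"
  by (induction k) (simp_all add: E_mem)

lemma F_pow_mem: "v \<in> V m \<Longrightarrow> (F ^^ k) v \<in> V (m - k)"
proof (induction k)
  case (Suc k)
  then show ?case
    using F_mem[OF Suc.IH] by simp
qed simp

lemma F_pow_eq_0: "v \<in> V m \<Longrightarrow> m < k \<Longrightarrow> (F ^^ k) v = 0"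
proof (induction k)
  case (Suc k)
  then show ?case
    using F_pow_mem[of v m k] F_bottom by (cases "m < k") auto
qed simp

lemma F_E_pow:
  assumes v: "v \<in> V m"
  shows "F ((E ^^ Suc j) v)
    = (E ^^ Suc j) (F v) - (of_nat (Suc j) * (weight m + of_nat j)) *s (E ^^ j) v"
proof (induction j)
  case 0
  then show ?case using commutator_weight[OF v] by (simp add: algebra_simps)
next
  case (Suc j)
  let ?u = "(E ^^ Suc j) v"
  have "F (E ?u) = E (F ?u) - weight (m + Suc j) *s ?u"
    using commutator_weight[OF E_pow_mem[OF v, of "Suc j"]] by (simp add: algebra_simps)
  also have "E (F ?u) = (E ^^ Suc (Suc j)) (F v) - (of_nat (Suc j) * (weight m + of_nat j)) *s ?u"
    unfolding Suc.IH by (simp add: E.diff E.scale)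
  finally have "F (E ?u) = (E ^^ Suc (Suc j)) (F v)
      - (of_nat (Suc j) * (weight m + of_nat j) + weight (m + Suc j)) *s ?u"
    by (simp add: scale_left_distrib diff_diff_eq)
  moreover have "of_nat (Suc j) * (weight m + of_nat j) + weight (m + Suc j)
      = of_nat (Suc (Suc j)) * (weight m + of_nat (Suc j))"
    using weight_add[of m "Suc j"] by (simp add: algebra_simps)
  ultimately show ?case by simp
qed

lemma E_F_pow_primitive:
  assumes u: "u \<in> V m" and Eu: "E u = 0"
  shows "E ((F ^^ Suc t) u) = (of_nat (Suc t) * (weight m - of_nat t)) *s (F ^^ t) u"
proof (induction t)
  case 0
  then show ?case using commutator_weight[OF u] Eu by simp
next
  case (Suc t)
  let ?z = "(F ^^ Suc t) u"
  show ?case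
  proof (cases "Suc t \<le> m")
    case True
    have "E (F ?z) = F (E ?z) + weight (m - Suc t) *s ?z"
      using commutator_weight[OF F_pow_mem[OF u, of "Suc t"]] by (simp add: algebra_simps)
    also have "F (E ?z) = (of_nat (Suc t) * (weight m - of_nat t)) *s ?z"
      unfolding Suc.IH by (simp add: F.scale)
    also have "weight (m - Suc t) = weight m - 2 * of_nat (Suc t)"
      using weight_add[of "m - Suc t" "Suc t"] True by simp
    finally have "E (F ?z)
        = (of_nat (Suc t) * (weight m - of_nat t) + (weight m - 2 * of_nat (Suc t))) *s ?z"
      by (simp add: scale_left_distrib)
    then show ?thesis by (simp add: algebra_simps)
  next
    case False
    then show ?thesis using F_pow_eq_0[OF u, of "Suc t"] F_pow_eq_0[OF u, of "Suc (Suc t)"] by simp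
  qed
qed

lemma E_pow_F_pow_primitive:
  assumes u: "u \<in> V m" and Eu: "E u = 0"
  shows "(E ^^ j) ((F ^^ j) u) = (\<Prod>t<j. of_nat (Suc t) * (weight m - of_nat t)) *s u"
proof (induction j)
  case (Suc j)
  have "(E ^^ Suc j) ((F ^^ Suc j) u) = (E ^^ j) (E ((F ^^ Suc j) u))"
    by (simp only: funpow_Suc_right comp_apply)
  also have "\<dots> = (of_nat (Suc j) * (weight m - of_nat j)) *s (E ^^ j) ((F ^^ j) u)"
    unfolding E_F_pow_primitive[OF u Eu] by (rule E_pow_scale)
  finally show ?case
    unfolding Suc.IH by (simp add: algebra_simps)
qed simp

text \<open>If \<open>E\<^bsup>j+1\<^esup> v = 0\<close>, commuting \<open>F\<close> past \<open>E\<^bsup>j+1\<^esup>\<close> gives \<open>E\<^bsup>j+1\<^esup> (F v) = c E\<^sup>j v\<close> with \<open>c \<noteq> 0\<close>;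
  then \<open>E\<^bsup>j+2\<^esup>\<close> kills \<open>F v\<close>, which has lower degree, so \<open>F v = 0\<close> and hence \<open>E\<^sup>j v = 0\<close>.\<close>

lemma E_pow_inj:
  assumes "v \<in> V m" and "2 * m + j \<le> D" and "(E ^^ j) v = 0"
  shows "v = 0"
  using assms
proof (induction m arbitrary: j v rule: less_induct)
  case (less m)
  from less.prems show ?case
  proof (induction j arbitrary: v)
    case (Suc j)
    define c where "c = of_nat (Suc j) * (weight m + of_nat j)"
    have EFv: "(E ^^ Suc j) (F v) = c *s (E ^^ j) v"
      using F_E_pow[OF \<open>v \<in> V m\<close>, of j] Suc.prems(3) by (simp add: c_def)
    then have EEFv: "(E ^^ Suc (Suc j)) (F v) = 0"
      using Suc.prems(3) by (simp add: E.scale)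
    have "F v = 0"
    proof (cases m)
      case 0
      then show ?thesis using F_bottom \<open>v \<in> V m\<close> by simp
    next
      case (Suc m')
      then show ?thesis
        using less.IH[of m' "F v" "Suc (Suc j)"] F_mem[OF \<open>v \<in> V m\<close>] Suc.prems(2) EEFv
        by simp
    qed
    have "c \<noteq> 0"
      using Suc.prems(2) weight_add_of_int_eq_0_iff[of m "int j"]
      by (simp add: c_def del: of_nat_Suc)
    with EFv \<open>F v = 0\<close> have "(E ^^ j) v = 0"
      by simp
    then show ?case
      using Suc.IH Suc.prems by simp
  qed simp
qed

text \<open>Downward induction on the degree: \<open>E u = E\<^bsup>j+1\<^esup> y\<close> by induction, so \<open>u - E\<^sup>j y\<close> is killed by \<open>E\<close>,
  and on such vectors \<open>E\<^sup>j F\<^sup>j\<close> is multiplication by a nonzero scalar.\<close>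

lemma E_pow_surj:
  assumes "u \<in> V m" and "D + j \<le> 2 * m"
  shows "\<exists>y\<in>V (m - j). (E ^^ j) y = u"
  using assms
proof (induction m arbitrary: j u rule: measure_induct_rule[where f="\<lambda>m. Suc D - m"])
  case (less m)
  show ?case
  proof (cases "D < m")
    case True
    then have "u = 0"
      using V_above_top less.prems(1) by blast
    then show ?thesis
      using subspace_0[OF subspace_V] by force
  next
    case False
    then have "j \<le> m"
      using less.prems(2) by simp
    obtain y where y: "y \<in> V (m - j)" and Ey: "(E ^^ Suc j) y = E u"
    proof -
      have "Suc D - Suc m < Suc D - m" and "D + Suc j \<le> 2 * Suc m"
        using False less.prems(2) by simp_all
      then show thesis
        using less.IH[of "Suc m" "E u" "Suc j"] E_mem[OF less.prems(1)] that by auto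
    qed
    define u' where "u' = u - (E ^^ j) y"
    have "(E ^^ j) y \<in> V m"
      using E_pow_mem[OF y, of j] \<open>j \<le> m\<close> by simp
    then have u': "u' \<in> V m"
      unfolding u'_def using less.prems(1) subspace_diff[OF subspace_V] by blast
    have Eu': "E u' = 0"
      unfolding u'_def using Ey by (simp add: E.diff)
    define P where "P = (\<Prod>t<j. of_nat (Suc t) * (weight m - of_nat t) :: 'a)"
    have "weight m - of_nat t \<noteq> 0" if "t < j" for t
      using weight_add_of_int_eq_0_iff[of m "- int t"] that less.prems(2) by simp
    then have "P \<noteq> 0"
      unfolding P_def by (simp del: of_nat_Suc)
    define y' where "y' = inverse P *s (F ^^ j) u'"
    have "(E ^^ j) y' = u'"
      using E_pow_F_pow_primitive[OF u' Eu'] \<open>P \<noteq> 0\<close> by (simp add: y'_def E_pow_scale P_def)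
    moreover have "y' \<in> V (m - j)"
      unfolding y'_def using subspace_scale[OF subspace_V] F_pow_mem[OF u'] by blast
    ultimately show ?thesis
      using y subspace_add[OF subspace_V]
      by (intro bexI[of _ "y + y'"]) (simp_all add: E_pow_add u'_def)
  qed
qed

end

section \<open>The monomial complete intersection as an \<open>sl\<^sub>2\<close>-module\<close>

lemma lookup_add_single:
  "Poly_Mapping.lookup (b + Poly_Mapping.single i c) j
    = Poly_Mapping.lookup b j + (if i = j then c else 0)"
  for b :: "'n \<Rightarrow>\<^sub>0 nat"
  by (simp add: lookup_add lookup_single when_def)

lemma lookup_diff_single:
  "Poly_Mapping.lookup (b - Poly_Mapping.single i c) j
    = Poly_Mapping.lookup b j - (if i = j then c else 0)"
  for b :: "'n \<Rightarrow>\<^sub>0 nat"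
  by (simp add: lookup_minus lookup_single when_def)

lemma add_single_diff_single [simp]: "b + Poly_Mapping.single i c - Poly_Mapping.single i c = b"
  for b :: "'n \<Rightarrow>\<^sub>0 nat"
  by (rule poly_mapping_eqI) (auto simp: lookup_diff_single lookup_add_single)

lemma diff_single_add_single:
  "c \<le> Poly_Mapping.lookup b i \<Longrightarrow> b - Poly_Mapping.single i c + Poly_Mapping.single i c = b"
  for b :: "'n \<Rightarrow>\<^sub>0 nat"
  by (rule poly_mapping_eqI) (auto simp: lookup_diff_single lookup_add_single)

lemma mdeg_eq_sum: "mdeg a = (\<Sum>i\<in>UNIV. Poly_Mapping.lookup a i)"
  for a :: "'n::finite \<Rightarrow>\<^sub>0 nat"
  unfolding mdeg_def by (rule sum.mono_neutral_left) (auto simp: in_keys_iff)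

lemma mdeg_add_single: "mdeg (b + Poly_Mapping.single i c) = mdeg b + c"
  for b :: "'n::finite \<Rightarrow>\<^sub>0 nat"
  by (simp add: mdeg_eq_sum lookup_add_single sum.distrib)

lemma homog_iff: "f \<in> homog m \<longleftrightarrow> (\<forall>a. Poly_Mapping.lookup f a \<noteq> 0 \<longrightarrow> mdeg a = m)"
  by (auto simp: homog_def in_keys_iff)

lemma var_power:
  "(var i :: ('n, 'a::comm_ring_1) mpoly) ^ k = Poly_Mapping.single (Poly_Mapping.single i k) 1"
  by (induction k) (simp_all add: var_def mult_single single_add[symmetric])

lemma lookup_single_mult:
  "Poly_Mapping.lookup (Poly_Mapping.single m 1 * f) b
    = (\<Sum>q. Poly_Mapping.lookup f q when b = m + q)"
  for f :: "('n, 'a::comm_ring_1) mpoly"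
proof -
  have "Poly_Mapping.lookup (Poly_Mapping.single m 1 * f) b =
      (\<Sum>l. (\<Sum>q. Poly_Mapping.lookup f q when b = l + q) when l = m)"
    by (simp add: lookup_mult lookup_single when_mult)
  also have "\<dots> = (\<Sum>q. Poly_Mapping.lookup f q when b = m + q)"
    by simp
  finally show ?thesis .
qed

lemma lookup_var_mult:
  "Poly_Mapping.lookup (var i * f) b =
     (if 1 \<le> Poly_Mapping.lookup b i then Poly_Mapping.lookup f (b - Poly_Mapping.single i 1) else 0)"
  for f :: "('n, 'a::comm_ring_1) mpoly"
proof -
  have "b = Poly_Mapping.single i 1 + q
      \<longleftrightarrow> 1 \<le> Poly_Mapping.lookup b i \<and> q = b - Poly_Mapping.single i 1"
    for q
    using diff_single_add_single[of 1 b i] add_single_diff_single[of q i 1]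
    by (auto simp: add.commute lookup_add)
  then show ?thesis
    unfolding var_def lookup_single_mult by simp
qed

lemma lookup_linear_form_mult:
  "Poly_Mapping.lookup ((\<Sum>i\<in>UNIV. var i) * f) b =
     (\<Sum>i\<in>UNIV. if 1 \<le> Poly_Mapping.lookup b i then Poly_Mapping.lookup f (b - Poly_Mapping.single i 1) else 0)"
  for f :: "('n::finite, 'a::comm_ring_1) mpoly"
  by (simp add: sum_distrib_right lookup_sum lookup_var_mult)

lemma linear_form_homog: "(\<Sum>i\<in>UNIV. var i :: ('n::finite, 'a::comm_ring_1) mpoly) \<in> homog 1"
proof (unfold homog_iff, intro allI impI)
  fix a
  assume "Poly_Mapping.lookup (\<Sum>i\<in>UNIV. var i :: ('n, 'a) mpoly) a \<noteq> 0"
  then obtain i where "Poly_Mapping.lookup (var i :: ('n, 'a) mpoly) a \<noteq> 0"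
    unfolding lookup_sum by (rule sum.not_neutral_contains_not_neutral)
  then have "a = Poly_Mapping.single i 1"
    by (simp add: var_def lookup_single when_def split: if_splits)
  then show "mdeg a = 1"
    using mdeg_add_single[of 0 i 1] by (simp add: mdeg_def)
qed

definition box :: "('n \<Rightarrow> nat) \<Rightarrow> ('n \<Rightarrow>\<^sub>0 nat) set" where
  "box d = {a. \<forall>i. Poly_Mapping.lookup a i < d i}"

lemma finite_box: "finite (box d)"
  for d :: "'n::finite \<Rightarrow> nat"
proof -
  have "box d \<subseteq> Poly_Mapping.lookup -` (PiE UNIV (\<lambda>i. {..<d i}))"
    by (auto simp: box_def PiE_iff)
  moreover have "finite (Poly_Mapping.lookup -` (PiE UNIV (\<lambda>i. {..<d i}) :: ('n \<Rightarrow> nat) set))"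
    by (rule finite_vimageI) (auto intro: finite_PiE injI)
  ultimately show ?thesis
    by (rule finite_subset)
qed

lemma diff_single_in_box: "b \<in> box d \<Longrightarrow> b - Poly_Mapping.single i c \<in> box d"
  by (auto simp: box_def lookup_diff_single intro: le_less_trans[OF diff_le_self])

lemma add_single_notin_box:
  "b \<in> box d \<Longrightarrow> b + Poly_Mapping.single j 1 \<notin> box d \<Longrightarrow> Poly_Mapping.lookup b j + 1 = d j"
  by (auto simp: box_def lookup_add_single split: if_splits) (metis Suc_lessI)

lemma mdeg_le_if_in_box:
  fixes d :: "'n::finite \<Rightarrow> nat"
  assumes "b \<in> box d"
  shows "mdeg b \<le> (\<Sum>i\<in>UNIV. d i - 1)"
  unfolding mdeg_eq_sum
proof (rule sum_mono)
  fix i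
  have "Poly_Mapping.lookup b i < d i"
    using assms by (simp add: box_def)
  then show "Poly_Mapping.lookup b i \<le> d i - 1"
    by linarith
qed

definition box_poly :: "('n::finite \<Rightarrow> nat) \<Rightarrow> (('n \<Rightarrow>\<^sub>0 nat) \<Rightarrow> 'a::zero) \<Rightarrow> ('n \<Rightarrow>\<^sub>0 nat) \<Rightarrow>\<^sub>0 'a" where
  "box_poly d c = Abs_poly_mapping (\<lambda>a. if a \<in> box d then c a else 0)"

lemma lookup_box_poly: "Poly_Mapping.lookup (box_poly d c) a = (if a \<in> box d then c a else 0)"
proof -
  have "finite {a. (if a \<in> box d then c a else 0) \<noteq> 0}"
    by (rule finite_subset[OF _ finite_box[of d]]) (auto split: if_splits)
  then show ?thesis
    by (simp add: box_poly_def)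
qed

definition reduced :: "('n::finite \<Rightarrow> nat) \<Rightarrow> ('n, 'a::zero) mpoly \<Rightarrow> bool" where
  "reduced d f \<longleftrightarrow> (\<forall>a. Poly_Mapping.lookup f a \<noteq> 0 \<longrightarrow> a \<in> box d)"

definition trunc :: "('n::finite \<Rightarrow> nat) \<Rightarrow> ('n, 'a::zero) mpoly \<Rightarrow> ('n, 'a) mpoly" where
  "trunc d f = box_poly d (Poly_Mapping.lookup f)"

lemma reduced_box_poly: "reduced d (box_poly d c)"
  by (simp add: reduced_def lookup_box_poly)

lemma reduced_trunc: "reduced d (trunc d f)"
  by (simp add: trunc_def reduced_box_poly)

lemma trunc_reduced: "reduced d f \<Longrightarrow> trunc d f = f"
  by (rule poly_mapping_eqI) (auto simp: trunc_def lookup_box_poly reduced_def)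

lemma trunc_add: "trunc d (f + g) = trunc d f + trunc d g"
  for f g :: "('n::finite, 'a::monoid_add) mpoly"
  by (rule poly_mapping_eqI) (simp add: trunc_def lookup_box_poly lookup_add)

lemma trunc_diff: "trunc d (f - g) = trunc d f - trunc d g"
  for f g :: "('n::finite, 'a::ab_group_add) mpoly"
  by (rule poly_mapping_eqI) (simp add: trunc_def lookup_box_poly lookup_minus)

lemma trunc_homog: "f \<in> homog m \<Longrightarrow> trunc d f \<in> homog m"
  by (auto simp: homog_iff trunc_def lookup_box_poly)

definition smult :: "'a::comm_ring_1 \<Rightarrow> ('n, 'a) mpoly \<Rightarrow> ('n, 'a) mpoly" where
  "smult c f = Abs_poly_mapping (\<lambda>a. c * Poly_Mapping.lookup f a)"

lemma lookup_smult: "Poly_Mapping.lookup (smult c f) a = c * Poly_Mapping.lookup f a"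
proof -
  have "finite {a. c * Poly_Mapping.lookup f a \<noteq> 0}"
    by (rule finite_subset[OF _ finite_lookup[of f]]) auto
  then show ?thesis
    by (simp add: smult_def)
qed

lemma vector_space_smult: "vector_space (smult :: 'a::field \<Rightarrow> ('n, 'a) mpoly \<Rightarrow> _)"
  by unfold_locales (auto intro!: poly_mapping_eqI simp: lookup_smult lookup_add algebra_simps)

definition raising :: "('n::finite \<Rightarrow> nat) \<Rightarrow> ('n, 'a::comm_ring_1) mpoly \<Rightarrow> ('n, 'a) mpoly" where
  "raising d f = trunc d ((\<Sum>i\<in>UNIV. var i) * f)"

lemma lookup_raising:
  "Poly_Mapping.lookup (raising d f) b = (if b \<in> box d then
     \<Sum>i\<in>UNIV. if 1 \<le> Poly_Mapping.lookup b i then Poly_Mapping.lookup f (b - Poly_Mapping.single i 1) else 0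
   else 0)"
  by (simp add: raising_def trunc_def lookup_box_poly lookup_linear_form_mult)

lemma trunc_linear_form_mult: "trunc d ((\<Sum>i\<in>UNIV. var i) * f) = raising d (trunc d f)"
  by (rule poly_mapping_eqI)
    (auto simp: lookup_raising trunc_def lookup_box_poly lookup_linear_form_mult diff_single_in_box
      intro!: sum.cong)

lemma trunc_linear_form_power_mult:
  "trunc d ((\<Sum>i\<in>UNIV. var i) ^ k * f) = (raising d ^^ k) (trunc d f)"
proof (induction k)
  case (Suc k)
  have "trunc d ((\<Sum>i\<in>UNIV. var i) ^ Suc k * f)
      = trunc d ((\<Sum>i\<in>UNIV. var i) * ((\<Sum>i\<in>UNIV. var i) ^ k * f))"
    by (simp add: mult.assoc)
  then show ?case
    by (simp add: trunc_linear_form_mult Suc.IH)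
qed simp

text \<open>\<open>F x\<^sup>a = \<Sum>\<^sub>j a\<^sub>j (d\<^sub>j - a\<^sub>j) x\<^bsup>a - e\<^sub>j\<^esup>\<close>. On each factor \<open>k[x\<^sub>j]/(x\<^sub>j\<^bsup>d\<^sub>j\<^esup>)\<close> this is the
  lowering operator of the irreducible \<open>sl\<^sub>2\<close>-module of dimension \<open>d\<^sub>j\<close>, with \<open>x\<^sub>j\<close> as raising
  operator.\<close>

definition lowering_coeff :: "('n \<Rightarrow> nat) \<Rightarrow> 'n \<Rightarrow> ('n \<Rightarrow>\<^sub>0 nat) \<Rightarrow> 'a::comm_ring_1" where
  "lowering_coeff d j b =
     of_nat (Poly_Mapping.lookup b j + 1) * (of_nat (d j) - of_nat (Poly_Mapping.lookup b j + 1))"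

definition lowering :: "('n::finite \<Rightarrow> nat) \<Rightarrow> ('n, 'a::comm_ring_1) mpoly \<Rightarrow> ('n, 'a) mpoly" where
  "lowering d f = box_poly d (\<lambda>b.
     \<Sum>j\<in>UNIV. lowering_coeff d j b * Poly_Mapping.lookup f (b + Poly_Mapping.single j 1))"

lemma lookup_lowering:
  "Poly_Mapping.lookup (lowering d f) b = (if b \<in> box d then
     \<Sum>j\<in>UNIV. lowering_coeff d j b * Poly_Mapping.lookup f (b + Poly_Mapping.single j 1) else 0)"
  by (simp add: lowering_def lookup_box_poly)

lemma linear_raising:
  "Vector_Spaces.linear smult smult (raising d :: ('n::finite, 'a::field) mpoly \<Rightarrow> _)"
proof -
  have "raising d (f + g) = raising d f + raising d g" for f g :: "('n, 'a) mpoly"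
    by (simp add: raising_def distrib_left trunc_add)
  moreover have "raising d (smult c f) = smult c (raising d f)" for c and f :: "('n, 'a) mpoly"
    by (rule poly_mapping_eqI)
      (simp add: lookup_raising lookup_smult sum_distrib_left if_distrib[of "(*) c"] cong: if_cong)
  ultimately show ?thesis
    using vector_space_smult by (simp add: linear_iff)
qed

lemma linear_lowering:
  "Vector_Spaces.linear smult smult (lowering d :: ('n::finite, 'a::field) mpoly \<Rightarrow> _)"
  unfolding linear_iff using vector_space_smult
  by (auto intro!: poly_mapping_eqI
      simp: lookup_lowering lookup_add lookup_smult sum.distrib sum_distrib_left algebra_simps)

lemma linear_form_mult_homog: "f \<in> homog m \<Longrightarrow> (\<Sum>i\<in>UNIV. var i) * f \<in> homog (Suc m)"
  for f :: "('n::finite, 'a::comm_ring_1) mpoly"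
proof (unfold homog_iff, intro allI impI)
  fix b
  assume f: "\<forall>a. Poly_Mapping.lookup f a \<noteq> 0 \<longrightarrow> mdeg a = m"
    and ne: "Poly_Mapping.lookup ((\<Sum>i\<in>UNIV. var i) * f) b \<noteq> 0"
  from ne obtain i where "(if 1 \<le> Poly_Mapping.lookup b i
      then Poly_Mapping.lookup f (b - Poly_Mapping.single i 1) else 0) \<noteq> 0"
    unfolding lookup_linear_form_mult by (rule sum.not_neutral_contains_not_neutral)
  then have "1 \<le> Poly_Mapping.lookup b i"
    and "Poly_Mapping.lookup f (b - Poly_Mapping.single i 1) \<noteq> 0"
    by (simp_all split: if_splits)
  then show "mdeg b = Suc m"
    using f mdeg_add_single[of "b - Poly_Mapping.single i 1" i 1] diff_single_add_single[of 1 b i]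
    by force
qed

lemma raising_homog: "f \<in> homog m \<Longrightarrow> raising d f \<in> homog (Suc m)"
  unfolding raising_def by (intro trunc_homog linear_form_mult_homog)

lemma lookup_lowering_nonzero_mdeg:
  assumes "f \<in> homog m" and "Poly_Mapping.lookup (lowering d f) b \<noteq> 0"
  shows "mdeg b + 1 = m"
proof -
  obtain j where "lowering_coeff d j b * Poly_Mapping.lookup f (b + Poly_Mapping.single j 1) \<noteq> 0"
    using assms(2) unfolding lookup_lowering
    by (auto split: if_splits elim: sum.not_neutral_contains_not_neutral)
  then have "Poly_Mapping.lookup f (b + Poly_Mapping.single j 1) \<noteq> 0"
    by auto
  then show ?thesis
    using assms(1) mdeg_add_single[of b j 1] by (simp add: homog_iff)
qed

lemma lowering_homog:
  assumes "f \<in> homog m"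
  shows "lowering d f \<in> homog (m - 1)"
  unfolding homog_iff using lookup_lowering_nonzero_mdeg[OF assms] by force

lemma lowering_homog_0:
  assumes "f \<in> homog 0"
  shows "lowering d f = 0"
  using lookup_lowering_nonzero_mdeg[OF assms] by (intro poly_mapping_eqI) fastforce

text \<open>The degree \<open>m\<close> part of \<open>R/(x\<^sub>i\<^bsup>d\<^sub>i\<^esup>)\<close>, represented by the polynomials supported on
  standard monomials.\<close>

definition reduced_homog :: "('n::finite \<Rightarrow> nat) \<Rightarrow> nat \<Rightarrow> ('n, 'a::comm_ring_1) mpoly set" where
  "reduced_homog d m = {f. reduced d f \<and> f \<in> homog m}"

lemma subspace_reduced_homog:
  "module.subspace smult (reduced_homog d m :: ('n::finite, 'a::field) mpoly set)"
  by (auto simp: module.subspace_def[OF vector_space_smult[unfolded module_iff_vector_space[symmetric]]]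
      reduced_homog_def reduced_def homog_iff lookup_add lookup_smult)
    (metis add_0)+

lemma commutator_summand_ne:
  fixes f :: "('n, 'a::comm_ring_1) mpoly"
  assumes "i \<noteq> j"
  shows "(if 1 \<le> Poly_Mapping.lookup b i then lowering_coeff d j (b - Poly_Mapping.single i 1) *
            Poly_Mapping.lookup f (b - Poly_Mapping.single i 1 + Poly_Mapping.single j 1) else 0)
    = lowering_coeff d j b * (if 1 \<le> Poly_Mapping.lookup (b + Poly_Mapping.single j 1) i
            then Poly_Mapping.lookup f (b + Poly_Mapping.single j 1 - Poly_Mapping.single i 1) else 0)"
proof (cases "1 \<le> Poly_Mapping.lookup b i")
  case True
  have "b - Poly_Mapping.single i 1 + Poly_Mapping.single j 1
      = b + Poly_Mapping.single j 1 - Poly_Mapping.single i 1"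
    using assms True by (auto intro!: poly_mapping_eqI simp: lookup_diff_single lookup_add_single)
  then show ?thesis
    using assms True by (simp add: lowering_coeff_def lookup_diff_single lookup_add_single)
qed (use assms in \<open>simp add: lookup_add_single\<close>)

lemma commutator_summand_eq:
  fixes f :: "('n, 'a::comm_ring_1) mpoly"
  shows "(if 1 \<le> Poly_Mapping.lookup b i then lowering_coeff d i (b - Poly_Mapping.single i 1) *
            Poly_Mapping.lookup f (b - Poly_Mapping.single i 1 + Poly_Mapping.single i 1) else 0)
    - lowering_coeff d i b * (if 1 \<le> Poly_Mapping.lookup (b + Poly_Mapping.single i 1) i
            then Poly_Mapping.lookup f (b + Poly_Mapping.single i 1 - Poly_Mapping.single i 1) else 0)
    = (2 * of_nat (Poly_Mapping.lookup b i) - of_nat (d i) + 1) * Poly_Mapping.lookup f b"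
proof (cases "1 \<le> Poly_Mapping.lookup b i")
  case True
  have "b - Poly_Mapping.single i 1 + Poly_Mapping.single i 1 = b"
    using True by (rule diff_single_add_single)
  with True show ?thesis
    by (simp add: lowering_coeff_def lookup_diff_single lookup_add_single of_nat_diff)
      (simp add: algebra_simps)
next
  case False
  then have "Poly_Mapping.lookup b i = 0"
    by simp
  then show ?thesis
    by (simp add: lowering_coeff_def lookup_add_single algebra_simps)
qed

text \<open>The off-diagonal summands of \<open>[E, F]\<close> cancel because they move different variables.\<close>

lemma commutator_summand:
  fixes f :: "('n, 'a::comm_ring_1) mpoly"
  shows "(if 1 \<le> Poly_Mapping.lookup b i then lowering_coeff d j (b - Poly_Mapping.single i 1) *
            Poly_Mapping.lookup f (b - Poly_Mapping.single i 1 + Poly_Mapping.single j 1) else 0)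
    - lowering_coeff d j b * (if 1 \<le> Poly_Mapping.lookup (b + Poly_Mapping.single j 1) i
            then Poly_Mapping.lookup f (b + Poly_Mapping.single j 1 - Poly_Mapping.single i 1) else 0)
    = (if i = j
       then (2 * of_nat (Poly_Mapping.lookup b i) - of_nat (d i) + 1) * Poly_Mapping.lookup f b
       else 0)"
proof (cases "i = j")
  case True
  show ?thesis
    unfolding True if_P[OF refl] by (rule commutator_summand_eq)
next
  case False
  show ?thesis
    unfolding if_not_P[OF False] commutator_summand_ne[OF False] by (rule diff_self)
qed

lemma lowering_coeff_eq_0:
  "b \<in> box d \<Longrightarrow> b + Poly_Mapping.single j 1 \<notin> box d \<Longrightarrow> lowering_coeff d j b = (0::'a::comm_ring_1)"
  using add_single_notin_box[of b d j] by (simp add: lowering_coeff_def)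

lemma of_int_weight_eq_sum:
  fixes d :: "'n::finite \<Rightarrow> nat"
  assumes "b \<in> box d"
  shows "(of_int (2 * int (mdeg b) - int (\<Sum>i\<in>UNIV. d i - 1)) :: 'a::comm_ring_1)
    = (\<Sum>i\<in>UNIV. 2 * of_nat (Poly_Mapping.lookup b i) - of_nat (d i) + 1)"
proof -
  have "1 \<le> d i" for i
    using assms by (auto simp: box_def intro: Suc_leI le_less_trans[OF le0])
  then have "(of_nat (\<Sum>i\<in>UNIV. d i - 1) :: 'a) = (\<Sum>i\<in>UNIV. of_nat (d i) - 1)"
    by (simp add: of_nat_diff)
  then show ?thesis
    by (simp add: mdeg_eq_sum sum.distrib sum_subtractf sum_distrib_left algebra_simps)
qed

lemma raising_lowering_commutator:
  fixes f :: "('n::finite, 'a::comm_ring_1) mpoly"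
  assumes "f \<in> reduced_homog d m"
  shows "raising d (lowering d f) - lowering d (raising d f)
    = smult (of_int (2 * int m - int (\<Sum>i\<in>UNIV. d i - 1))) f"
proof (rule poly_mapping_eqI)
  fix b
  have f: "reduced d f" "f \<in> homog m"
    using assms by (simp_all add: reduced_homog_def)
  show "Poly_Mapping.lookup (raising d (lowering d f) - lowering d (raising d f)) b
    = Poly_Mapping.lookup (smult (of_int (2 * int m - int (\<Sum>i\<in>UNIV. d i - 1))) f) b"
  proof (cases "b \<in> box d")
    case False
    then have "Poly_Mapping.lookup f b = 0"
      using f(1) by (auto simp: reduced_def)
    with False show ?thesis
      by (simp add: lookup_minus lookup_smult lookup_raising lookup_lowering)
  next
    case b: True
    have EF: "Poly_Mapping.lookup (raising d (lowering d f)) b =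
      (\<Sum>i\<in>UNIV. \<Sum>j\<in>UNIV. if 1 \<le> Poly_Mapping.lookup b i
        then lowering_coeff d j (b - Poly_Mapping.single i 1) *
          Poly_Mapping.lookup f (b - Poly_Mapping.single i 1 + Poly_Mapping.single j 1) else 0)"
      using b by (auto intro!: sum.cong simp: lookup_raising lookup_lowering diff_single_in_box)
    have "lowering_coeff d j b * Poly_Mapping.lookup (raising d f) (b + Poly_Mapping.single j 1)
      = lowering_coeff d j b * (\<Sum>i\<in>UNIV. if 1 \<le> Poly_Mapping.lookup (b + Poly_Mapping.single j 1) i
          then Poly_Mapping.lookup f (b + Poly_Mapping.single j 1 - Poly_Mapping.single i 1) else 0)"
      for j
    proof (cases "b + Poly_Mapping.single j 1 \<in> box d")
      case True
      then show ?thesis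
        by (simp only: lookup_raising if_True)
    next
      case False
      then show ?thesis
        using lowering_coeff_eq_0[OF b False, where 'a='a] by simp
    qed
    then have "Poly_Mapping.lookup (lowering d (raising d f)) b =
      (\<Sum>j\<in>UNIV. \<Sum>i\<in>UNIV. lowering_coeff d j b *
        (if 1 \<le> Poly_Mapping.lookup (b + Poly_Mapping.single j 1) i
         then Poly_Mapping.lookup f (b + Poly_Mapping.single j 1 - Poly_Mapping.single i 1) else 0))"
      using b by (simp add: lookup_lowering sum_distrib_left)
    also have "\<dots> =
      (\<Sum>i\<in>UNIV. \<Sum>j\<in>UNIV. lowering_coeff d j b *
        (if 1 \<le> Poly_Mapping.lookup (b + Poly_Mapping.single j 1) i
         then Poly_Mapping.lookup f (b + Poly_Mapping.single j 1 - Poly_Mapping.single i 1) else 0))"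
      by (rule sum.swap)
    finally have FE: "Poly_Mapping.lookup (lowering d (raising d f)) b = \<dots>" .
    have "Poly_Mapping.lookup (raising d (lowering d f) - lowering d (raising d f)) b
      = (\<Sum>i\<in>UNIV.
          (2 * of_nat (Poly_Mapping.lookup b i) - of_nat (d i) + 1) * Poly_Mapping.lookup f b)"
      unfolding lookup_minus EF FE sum_subtractf[symmetric] commutator_summand by simp
    also have "\<dots> = of_int (2 * int m - int (\<Sum>i\<in>UNIV. d i - 1)) * Poly_Mapping.lookup f b"
      using f(2) of_int_weight_eq_sum[OF b, where 'a='a]
      by (cases "Poly_Mapping.lookup f b = 0") (auto simp: homog_iff sum_distrib_right)
    finally show ?thesis
      by (simp add: lookup_smult)
  qed
qed

lemma reduced_raising: "reduced d (raising d f)"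
  by (simp add: raising_def trunc_def reduced_box_poly)

lemma reduced_lowering: "reduced d (lowering d f)"
  by (simp add: lowering_def reduced_box_poly)

lemma reduced_homog_eq_0:
  assumes "f \<in> reduced_homog d m" and "(\<Sum>i\<in>UNIV. d i - 1) < m"
  shows "f = 0"
proof (rule poly_mapping_eqI)
  fix a
  show "Poly_Mapping.lookup f a = Poly_Mapping.lookup 0 a"
    using assms mdeg_le_if_in_box[of a d] by (force simp: reduced_homog_def reduced_def homog_iff)
qed

lemma graded_sl2_monomial:
  "graded_sl2 smult (reduced_homog d) (\<Sum>i\<in>UNIV. d i - 1) (raising d)
     (lowering d :: ('n::finite, 'a::field_char_0) mpoly \<Rightarrow> _)"
proof (intro graded_sl2.intro graded_sl2_axioms.intro vector_space_smult)
  fix m and v :: "('n, 'a) mpoly"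
  show "module.subspace smult (reduced_homog d m :: ('n, 'a) mpoly set)"
    by (rule subspace_reduced_homog)
  show "Vector_Spaces.linear smult smult (raising d :: ('n, 'a) mpoly \<Rightarrow> _)"
    by (rule linear_raising)
  show "Vector_Spaces.linear smult smult (lowering d :: ('n, 'a) mpoly \<Rightarrow> _)"
    by (rule linear_lowering)
  show "v \<in> reduced_homog d m \<Longrightarrow> raising d v \<in> reduced_homog d (Suc m)"
    by (simp add: reduced_homog_def reduced_raising raising_homog)
  show "v \<in> reduced_homog d m \<Longrightarrow> lowering d v \<in> reduced_homog d (m - 1)"
    using lowering_homog[of v m d] by (simp add: reduced_homog_def reduced_lowering)
  show "v \<in> reduced_homog d 0 \<Longrightarrow> lowering d v = 0"
    by (simp add: reduced_homog_def lowering_homog_0)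
  show "(\<Sum>i\<in>UNIV. d i - 1) < m \<Longrightarrow> v \<in> reduced_homog d m \<Longrightarrow> v = 0"
    by (rule reduced_homog_eq_0)
  show "v \<in> reduced_homog d m \<Longrightarrow> raising d (lowering d v) - lowering d (raising d v)
      = smult (of_int (2 * int m - int (\<Sum>i\<in>UNIV. d i - 1))) v"
    by (rule raising_lowering_commutator)
qed

section \<open>The colon ideal\<close>

lemma poly_mapping_sum_single:
  "f = (\<Sum>a\<in>Poly_Mapping.keys f. Poly_Mapping.single a (Poly_Mapping.lookup f a))"
  by (rule poly_mapping_eqI) (simp add: lookup_sum lookup_single when_def in_keys_iff)

lemma gen_ideal_sum:
  assumes "\<And>x. x \<in> A \<Longrightarrow> h x \<in> gen_ideal g"
  shows "sum h A \<in> gen_ideal g"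
  using assms
proof (induction A rule: infinite_finite_induct)
  case (insert x A)
  obtain c c' where "h x = (\<Sum>i\<in>UNIV. c i * g i)" and "sum h A = (\<Sum>i\<in>UNIV. c' i * g i)"
    using insert by (fastforce simp: gen_ideal_def)
  then have "sum h (insert x A) = (\<Sum>i\<in>UNIV. (c i + c' i) * g i)"
    using insert.hyps by (simp add: distrib_right sum.distrib)
  then show ?case
    by (auto simp: gen_ideal_def)
qed (auto simp: gen_ideal_def intro: exI[of _ "\<lambda>_. 0"])

lemma single_mem_monomial_ideal:
  assumes "a \<notin> box d"
  shows "Poly_Mapping.single a c
    \<in> gen_ideal (\<lambda>i. var i ^ d i :: ('n::finite, 'a::comm_ring_1) mpoly)"
proof -
  obtain i where i: "d i \<le> Poly_Mapping.lookup a i"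
    using assms by (auto simp: box_def not_less)
  define q where "q = Poly_Mapping.single (a - Poly_Mapping.single i (d i)) c"
  have "(\<Sum>k\<in>UNIV. (if k = i then q else 0) * var k ^ d k) = q * var i ^ d i"
    by (simp add: if_distrib[of "\<lambda>x. x * _"] cong: if_cong)
  also have "\<dots> = Poly_Mapping.single a c"
    using diff_single_add_single[OF i] by (simp add: q_def var_power mult_single)
  finally show ?thesis
    unfolding gen_ideal_def by (intro CollectI exI[of _ "\<lambda>k. if k = i then q else 0"]) simp
qed

lemma lookup_monomial_ideal_in_box:
  assumes "f \<in> gen_ideal (\<lambda>i. var i ^ d i :: ('n::finite, 'a::comm_ring_1) mpoly)" and "b \<in> box d"
  shows "Poly_Mapping.lookup f b = 0"
proof -
  obtain c where f: "f = (\<Sum>i\<in>UNIV. c i * var i ^ d i)"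
    using assms(1) by (auto simp: gen_ideal_def)
  have "b \<noteq> Poly_Mapping.single i (d i) + q" for i q
  proof
    assume "b = Poly_Mapping.single i (d i) + q"
    then have "d i \<le> Poly_Mapping.lookup b i"
      by (simp add: lookup_add)
    moreover have "Poly_Mapping.lookup b i < d i"
      using assms(2) by (simp add: box_def)
    ultimately show False
      by linarith
  qed
  then have "Poly_Mapping.lookup (var i ^ d i * c i) b = 0" for i
    unfolding var_power lookup_single_mult by simp
  then show ?thesis
    by (simp add: f lookup_sum mult.commute)
qed

lemma mem_monomial_ideal_iff:
  "f \<in> gen_ideal (\<lambda>i. var i ^ d i :: ('n::finite, 'a::comm_ring_1) mpoly) \<longleftrightarrow> trunc d f = 0"
proof
  assume "f \<in> gen_ideal (\<lambda>i. var i ^ d i)"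
  then show "trunc d f = 0"
    by (intro poly_mapping_eqI) (simp add: trunc_def lookup_box_poly lookup_monomial_ideal_in_box)
next
  assume trunc: "trunc d f = 0"
  have "a \<notin> box d" if "a \<in> Poly_Mapping.keys f" for a
  proof
    assume "a \<in> box d"
    then have "Poly_Mapping.lookup (trunc d f) a = Poly_Mapping.lookup f a"
      by (simp add: trunc_def lookup_box_poly)
    with trunc that show False
      by (simp add: in_keys_iff)
  qed
  then have "(\<Sum>a\<in>Poly_Mapping.keys f. Poly_Mapping.single a (Poly_Mapping.lookup f a))
      \<in> gen_ideal (\<lambda>i. var i ^ d i)"
    by (intro gen_ideal_sum single_mem_monomial_ideal)
  then show "f \<in> gen_ideal (\<lambda>i. var i ^ d i)"
    by (simp flip: poly_mapping_sum_single)
qed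

lemma mem_colon_iff:
  "f \<in> colon (gen_ideal (\<lambda>i. var i ^ d i)) ((\<Sum>i\<in>UNIV. var i) ^ e)
    \<longleftrightarrow> (raising d ^^ e) (trunc d f) = 0"
  for f :: "('n::finite, 'a::comm_ring_1) mpoly"
  by (simp add: colon_def mem_monomial_ideal_iff mult.commute[of f] trunc_linear_form_power_mult)

lemma colon_linear_form_power_mult_injective:
  fixes d :: "'n::finite \<Rightarrow> nat" and f :: "('n, 'a::field_char_0) mpoly"
  assumes "2 * i + j + e \<le> (\<Sum>k\<in>UNIV. d k - 1)" and "f \<in> homog i"
    and "(\<Sum>k\<in>UNIV. var k) ^ j * f \<in> colon (gen_ideal (\<lambda>k. var k ^ d k)) ((\<Sum>k\<in>UNIV. var k) ^ e)"
  shows "f \<in> colon (gen_ideal (\<lambda>k. var k ^ d k)) ((\<Sum>k\<in>UNIV. var k) ^ e)"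
proof -
  interpret graded_sl2 smult "reduced_homog d" "\<Sum>k\<in>UNIV. d k - 1" "raising d"
    "lowering d :: ('n, 'a) mpoly \<Rightarrow> _"
    by (rule graded_sl2_monomial)
  have "trunc d f \<in> reduced_homog d i"
    using assms(2) by (simp add: reduced_homog_def reduced_trunc trunc_homog)
  moreover have "(raising d ^^ (e + j)) (trunc d f) = 0"
    using assms(3) by (simp add: mem_colon_iff trunc_linear_form_power_mult funpow_add)
  ultimately have "trunc d f = 0"
    using assms(1) E_pow_inj[of "trunc d f" i "e + j"] by simp
  then show ?thesis
    by (simp add: mem_colon_iff)
qed

lemma colon_linear_form_power_mult_surjective:
  fixes d :: "'n::finite \<Rightarrow> nat" and g :: "('n, 'a::field_char_0) mpoly"
  assumes "(\<Sum>k\<in>UNIV. d k - 1) \<le> 2 * i + j + e" and "g \<in> homog (i + j)"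
  shows "\<exists>f\<in>homog i.
    g - (\<Sum>k\<in>UNIV. var k) ^ j * f \<in> colon (gen_ideal (\<lambda>k. var k ^ d k)) ((\<Sum>k\<in>UNIV. var k) ^ e)"
proof -
  interpret graded_sl2 smult "reduced_homog d" "\<Sum>k\<in>UNIV. d k - 1" "raising d"
    "lowering d :: ('n, 'a) mpoly \<Rightarrow> _"
    by (rule graded_sl2_monomial)
  have "(raising d ^^ e) (trunc d g) \<in> reduced_homog d (i + j + e)"
    using assms(2) by (intro E_pow_mem) (simp add: reduced_homog_def reduced_trunc trunc_homog)
  then obtain f where f: "f \<in> reduced_homog d i"
    and Ef: "(raising d ^^ (e + j)) f = (raising d ^^ e) (trunc d g)"
    using E_pow_surj[of _ "i + j + e" "e + j"] assms(1) by auto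
  have "g - (\<Sum>k\<in>UNIV. var k) ^ j * f
      \<in> colon (gen_ideal (\<lambda>k. var k ^ d k)) ((\<Sum>k\<in>UNIV. var k) ^ e)"
    using f Ef by (simp add: mem_colon_iff trunc_diff trunc_linear_form_power_mult E_pow_diff
        reduced_homog_def trunc_reduced funpow_add)
  moreover have "f \<in> homog i"
    using f by (simp add: reduced_homog_def)
  ultimately show ?thesis
    by blast
qed

theorem mainTheorem14:
  fixes d :: "'n::finite \<Rightarrow> nat" and e :: nat
  assumes "\<forall>i. d i > 0" and "e > 0"
  shows "strong_lefschetz
           (colon (gen_ideal (\<lambda>i. (var i :: ('n, 'a::field_char_0) mpoly) ^ d i))
                  ((\<Sum>i\<in>UNIV. var i) ^ e))"
proof -
  let ?l = "\<Sum>i\<in>UNIV. var i :: ('n, 'a) mpoly"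
  let ?G = "colon (gen_ideal (\<lambda>i. var i ^ d i)) (?l ^ e)"
  have "(\<forall>f\<in>homog i. ?l ^ j * f \<in> ?G \<longrightarrow> f \<in> ?G)
      \<or> (\<forall>g\<in>homog (i + j). \<exists>f\<in>homog i. g - ?l ^ j * f \<in> ?G)"
    for i j
  proof (cases "2 * i + j + e \<le> (\<Sum>k\<in>UNIV. d k - 1)")
    case True
    then show ?thesis
      using colon_linear_form_power_mult_injective[OF True] by blast
  next
    case False
    then have "(\<Sum>k\<in>UNIV. d k - 1) \<le> 2 * i + j + e"
      by simp
    then show ?thesis
      using colon_linear_form_power_mult_surjective by blast
  qed
  then show ?thesis
    using linear_form_homog unfolding strong_lefschetz_def by blast
qed

end
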